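(* Let $g:\mathbb{R}\to\mathbb{R}$ be a periodic $C^1$ function of period $1$ with finitely many critical points in $[0,1]$. Then there exist a constant $C>0$ and, for every $\epsilon>0$, a number $\delta=\delta(\epsilon)>0$ with $\delta(\epsilon)\to 0$ as $\epsilon\to0$, such that for every $\epsilon>0$ the set $$A=\{(x,y)\in[0,1]^2 : |g(x)-g(y)|<\epsilon\}$$ can be covered by $N\le C/\delta$ squares with horizontal and vertical sides of length $\delta$.
   Context: A critical point of $g$ is a point where $g'$ vanishes. *)

theory Defs
  imports "HOL-Analysis.Analysis"
begin

definition square :: "real \<times> real \<Rightarrow> real \<Rightarrow> (real \<times> real) set" where
  "square p d = {fst p .. fst p + d} \<times> {snd p .. snd p + d}"

end

theory Submission
  imports Defs
begin

text \<open>
  Cut \<open>[0, 1]\<close> at the critical points of \<open>g\<close> into finitely many closed pieces on each of which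
  \<open>\<sigma> * g\<close> is strictly increasing for a sign \<open>\<sigma> = \<plusminus>1\<close>. By compactness, for every scale \<open>\<delta>\<close> there
  is an \<open>\<epsilon>\<close> such that points of one piece at distance at least \<open>\<delta>/2\<close> have values of \<open>g\<close> more than
  \<open>2\<epsilon>\<close> apart; inverting \<open>\<delta> \<mapsto> \<epsilon>\<close> gives \<open>\<delta>(\<epsilon>) \<rightarrow> 0\<close>. Now take \<open>(x, y)\<close> and \<open>(x', y')\<close> in the
  set, with \<open>x, x'\<close> in a piece \<open>I\<close> of sign \<open>\<sigma>\<close> and \<open>y, y'\<close> in a piece \<open>J\<close> of sign \<open>\<tau>\<close>. If \<open>x\<close> and
  \<open>x'\<close> are \<open>\<delta>/2\<close> apart, then \<open>g\<close> moves by more than \<open>2\<epsilon>\<close> between them, hence in the same direction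
  between \<open>y\<close> and \<open>y'\<close>, so \<open>x + \<sigma>\<tau> y\<close> and \<open>x' + \<sigma>\<tau> y'\<close> are \<open>\<delta>/2\<close> apart as well. Binning the
  quantity \<open>x + \<sigma>\<tau> y\<close> (which lies in \<open>[-1, 2]\<close>) at width \<open>\<delta>/2\<close> for each pair of pieces therefore
  splits the set into at most \<open>8 |P|\<^sup>2 / \<delta>\<close> clusters, each contained in one square of side \<open>\<delta>\<close>.
\<close>

lemma connected_nonvanishing_imp_sign:
  fixes f :: "'a::topological_space \<Rightarrow> real"
  assumes "connected S" "continuous_on S f" "\<And>x. x \<in> S \<Longrightarrow> f x \<noteq> 0"
  shows "\<exists>\<sigma>\<in>{-1, 1}. \<forall>x\<in>S. 0 < \<sigma> * f x"
proof -
  have "connected (f ` S)"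
    using assms(1,2) by (rule connected_continuous_image[rotated])
  have sign_fixed: False if "x \<in> S" "y \<in> S" "f x < 0" "0 < f y" for x y
  proof -
    have "0 \<in> f ` S"
      using \<open>connected (f ` S)\<close> that unfolding connected_iff_interval by (meson imageI less_imp_le)
    then show False
      using assms(3) by auto
  qed
  show ?thesis
  proof (cases "\<exists>x\<in>S. f x < 0")
    case True
    then have "\<forall>x\<in>S. f x < 0"
      using sign_fixed assms(3) by (meson linorder_neqE_linordered_idom)
    then show ?thesis by (intro bexI[of _ "-1"]) auto
  next
    case False
    then have "\<forall>x\<in>S. 0 < f x"
      using assms(3) by (fastforce simp: not_less le_less)
    then show ?thesis by (intro bexI[of _ 1]) auto
  qed
qed

lemma strict_mono_on_sign_if_deriv_nonzero:
  fixes g g' :: "real \<Rightarrow> real"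
  assumes deriv: "\<And>x. s \<le> x \<Longrightarrow> x \<le> t \<Longrightarrow> (g has_real_derivative g' x) (at x)"
    and cont: "continuous_on {s<..<t} g'"
    and nonzero: "\<And>x. s < x \<Longrightarrow> x < t \<Longrightarrow> g' x \<noteq> 0"
  shows "\<exists>\<sigma>\<in>{-1, 1}. strict_mono_on {s..t} (\<lambda>x. \<sigma> * g x)"
proof -
  have "\<exists>\<sigma>\<in>{-1, 1}. \<forall>x\<in>{s<..<t}. 0 < \<sigma> * g' x"
    by (rule connected_nonvanishing_imp_sign[OF connected_Ioo cont]) (simp add: nonzero)
  then obtain \<sigma> where \<sigma>: "\<sigma> \<in> {-1, 1}" and pos: "\<forall>x\<in>{s<..<t}. 0 < \<sigma> * g' x" ..
  have "\<sigma> * g x < \<sigma> * g y" if "s \<le> x" "x < y" "y \<le> t" for x y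
  proof (rule DERIV_pos_imp_increasing_open[OF \<open>x < y\<close>])
    show "\<exists>D. ((\<lambda>x. \<sigma> * g x) has_real_derivative D) (at z) \<and> 0 < D" if "x < z" "z < y" for z
      using that \<open>s \<le> x\<close> \<open>y \<le> t\<close> pos by (intro exI[of _ "\<sigma> * g' z"] conjI DERIV_cmult deriv) auto
    have "continuous_on {x..y} g"
      by (rule DERIV_continuous_on, rule has_field_derivative_at_within, rule deriv) (use that in auto)
    then show "continuous_on {x..y} (\<lambda>x. \<sigma> * g x)"
      by (intro continuous_intros)
  qed
  then show ?thesis
    using \<sigma> by (intro bexI[of _ \<sigma>] strict_mono_onI) auto
qed

definition gaps :: "real set \<Rightarrow> (real \<times> real) set" where
  "gaps T = {(u, v) \<in> T \<times> T. u \<le> v \<and> {u<..<v} \<inter> T = {}}"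

lemma finite_gaps: "finite T \<Longrightarrow> finite (gaps T)"
  unfolding gaps_def by (rule finite_subset[of _ "T \<times> T"]) auto

lemma gaps_cover:
  assumes "finite T" "a \<in> T" "b \<in> T" "a \<le> x" "x \<le> b"
  shows "\<exists>(u, v)\<in>gaps T. u \<le> x \<and> x \<le> v"
proof -
  let ?L = "{t \<in> T. t \<le> x}" and ?U = "{t \<in> T. x \<le> t}"
  have fin: "finite ?L" "finite ?U" and ne: "?L \<noteq> {}" "?U \<noteq> {}"
    using assms by auto
  have "Max ?L \<in> ?L"
    using fin(1) ne(1) by (rule Max_in)
  moreover have "Min ?U \<in> ?U"
    using fin(2) ne(2) by (rule Min_in)
  moreover have "{Max ?L<..<Min ?U} \<inter> T = {}"
    using Max_ge[OF fin(1)] Min_le[OF fin(2)] by fastforce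
  ultimately show ?thesis
    unfolding gaps_def by (intro bexI[of _ "(Max ?L, Min ?U)"]) auto
qed

lemma piecewise_strict_mono_on:
  fixes g :: "real \<Rightarrow> real"
  assumes diff: "\<And>x. g differentiable at x"
    and C1: "continuous_on UNIV (deriv g)"
    and crit: "finite {x \<in> {a..b}. deriv g x = 0}"
  obtains P \<sigma> where "finite P" "{a..b} \<subseteq> \<Union>P" "\<And>I. I \<in> P \<Longrightarrow> compact I"
    "\<And>I. I \<in> P \<Longrightarrow> \<sigma> I \<in> {-1, 1}" "\<And>I. I \<in> P \<Longrightarrow> strict_mono_on I (\<lambda>x. \<sigma> I * g x)"
proof -
  define T where "T = {x \<in> {a..b}. deriv g x = 0 \<or> x = a \<or> x = b}"
  have "T \<subseteq> insert a (insert b {x \<in> {a..b}. deriv g x = 0})"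
    by (auto simp: T_def)
  then have "finite T"
    by (rule finite_subset) (use crit in simp)
  define P where "P = (\<lambda>(u, v). {u..v}) ` gaps T"
  define \<sigma> where "\<sigma> I = (SOME \<sigma>. \<sigma> \<in> {-1, 1} \<and> strict_mono_on I (\<lambda>x. \<sigma> * g x))" for I
  have monotone_gap: "\<exists>\<sigma>\<in>{-1, 1}. strict_mono_on {u..v} (\<lambda>x. \<sigma> * g x)" if "(u, v) \<in> gaps T" for u v
  proof (rule strict_mono_on_sign_if_deriv_nonzero)
    show "(g has_real_derivative deriv g x) (at x)" for x
      using diff DERIV_deriv_iff_real_differentiable by blast
    show "continuous_on {u<..<v} (deriv g)"
      using C1 by (rule continuous_on_subset) simp
    show "deriv g x \<noteq> 0" if "u < x" "x < v" for x
      using \<open>(u, v) \<in> gaps T\<close> that by (auto simp: gaps_def T_def)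
  qed
  have "\<sigma> I \<in> {-1, 1} \<and> strict_mono_on I (\<lambda>x. \<sigma> I * g x)" if I: "I \<in> P" for I
  proof -
    obtain u v where "(u, v) \<in> gaps T" "I = {u..v}"
      using I by (auto simp: P_def)
    then have "\<exists>\<sigma>. \<sigma> \<in> {-1, 1} \<and> strict_mono_on I (\<lambda>x. \<sigma> * g x)"
      using monotone_gap by blast
    then show ?thesis
      unfolding \<sigma>_def by (rule someI_ex)
  qed
  moreover have "{a..b} \<subseteq> \<Union>P"
  proof
    fix x assume "x \<in> {a..b}"
    then have "a \<in> T" "b \<in> T"
      by (auto simp: T_def)
    then obtain u v where "(u, v) \<in> gaps T" "x \<in> {u..v}"
      using gaps_cover[OF \<open>finite T\<close>] \<open>x \<in> {a..b}\<close> by fastforce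
    moreover have "{u..v} \<in> P"
      unfolding P_def using \<open>(u, v) \<in> gaps T\<close> by force
    ultimately show "x \<in> \<Union>P"
      by blast
  qed
  moreover have "finite P" "\<And>I. I \<in> P \<Longrightarrow> compact I"
    using finite_gaps[OF \<open>finite T\<close>] by (auto simp: P_def)
  ultimately show ?thesis
    using that by blast
qed

lemma compact_inj_on_separation:
  fixes f :: "'a::metric_space \<Rightarrow> 'b::metric_space"
  assumes "compact S" "continuous_on S f" "inj_on f S" "0 < r"
  shows "\<exists>\<eta>>0. \<forall>x\<in>S. \<forall>x'\<in>S. r \<le> dist x x' \<longrightarrow> \<eta> \<le> dist (f x) (f x')"
proof -
  have "continuous_on (f ` S) (the_inv_into S f)"
    using assms by (intro continuous_on_inv) (auto simp: the_inv_into_f_f)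
  then have "uniformly_continuous_on (f ` S) (the_inv_into S f)"
    using assms by (intro compact_uniformly_continuous compact_continuous_image)
  then obtain \<eta> where "\<eta> > 0" "\<forall>y\<in>f ` S. \<forall>y'\<in>f ` S. dist y' y < \<eta> \<longrightarrow>
      dist (the_inv_into S f y') (the_inv_into S f y) < r"
    using \<open>0 < r\<close> unfolding uniformly_continuous_on_def by metis
  then show ?thesis
    using assms(3) by (intro exI[of _ \<eta>]) (force simp: the_inv_into_f_f not_less)
qed

definition separating_on :: "real set \<Rightarrow> (real \<Rightarrow> real) \<Rightarrow> real \<Rightarrow> real \<Rightarrow> bool" where
  "separating_on I g r \<eta> \<longleftrightarrow> (\<forall>x\<in>I. \<forall>x'\<in>I. r \<le> \<bar>x - x'\<bar> \<longrightarrow> \<eta> < \<bar>g x - g x'\<bar>)"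

lemma eventually_separating_on:
  fixes g :: "real \<Rightarrow> real"
  assumes "compact I" "continuous_on I g" "inj_on g I" "0 < r"
  shows "\<forall>\<^sub>F \<eta> in at_right 0. separating_on I g r \<eta>"
proof -
  obtain \<eta>0 where "\<eta>0 > 0" "\<forall>x\<in>I. \<forall>x'\<in>I. r \<le> \<bar>x - x'\<bar> \<longrightarrow> \<eta>0 \<le> \<bar>g x - g x'\<bar>"
    using compact_inj_on_separation[OF assms] by (auto simp: dist_real_def)
  then show ?thesis
    unfolding eventually_at_right_field separating_on_def by (intro exI[of _ \<eta>0]) force
qed

lemma exists_scale_tendsto_0:
  fixes Q :: "real \<Rightarrow> real \<Rightarrow> bool"
  assumes "\<And>r. 0 < r \<Longrightarrow> \<forall>\<^sub>F e in at_right 0. Q r e"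
  shows "\<exists>\<delta>. (\<forall>e. 0 < \<delta> e \<and> \<delta> e \<le> 1) \<and> (\<delta> \<longlongrightarrow> 0) (at_right 0) \<and> (\<forall>e. \<delta> e = 1 \<or> Q (\<delta> e) e)"
proof -
  define r where "r n = inverse (real (Suc n))" for n
  \<comment> \<open>The cap \<open>n \<le> 1 / e\<close> keeps the set of admissible indices finite.\<close>
  define K where "K e = insert 0 {n. real n \<le> inverse e \<and> Q (r n) e}" for e
  define k where "k e = Max (K e)" for e
  have fin: "finite (K e)" for e
  proof -
    have "{n. real n \<le> inverse e} \<subseteq> {..nat \<lceil>inverse e\<rceil>}"
      by (auto dest: order_trans[OF _ real_nat_ceiling_ge])
    then show ?thesis
      unfolding K_def by (auto intro: finite_subset)
  qed
  have "k e \<in> K e" for e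
    unfolding k_def using fin by (rule Max_in) (simp add: K_def)
  then have "r (k e) = 1 \<or> Q (r (k e)) e" for e
    by (auto simp: K_def r_def)
  moreover have "0 < r n \<and> r n \<le> 1" for n
    by (simp add: r_def inverse_le_1_iff)
  moreover have "filterlim k at_top (at_right 0)"
    unfolding filterlim_at_top
  proof
    fix N :: nat
    have "\<forall>\<^sub>F e in at_right 0. real N \<le> inverse e"
      using filterlim_inverse_at_top_right by (simp add: filterlim_at_top)
    moreover have "\<forall>\<^sub>F e in at_right 0. Q (r N) e"
      by (rule assms) (simp add: r_def)
    ultimately have "\<forall>\<^sub>F e in at_right 0. N \<in> K e"
      by eventually_elim (simp add: K_def)
    then show "\<forall>\<^sub>F e in at_right 0. N \<le> k e"
      unfolding k_def by (rule eventually_mono) (rule Max_ge[OF fin])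
  qed
  then have "((\<lambda>e. r (k e)) \<longlongrightarrow> 0) (at_right 0)"
    unfolding r_def by (rule filterlim_compose[OF LIMSEQ_inverse_real_of_nat])
  ultimately show ?thesis
    by (intro exI[of _ "\<lambda>e. r (k e)"]) blast
qed

lemma strict_mono_on_sgn_diff:
  fixes f :: "real \<Rightarrow> real"
  assumes "strict_mono_on I f" "x \<in> I" "x' \<in> I"
  shows "sgn (f x' - f x) = sgn (x' - x)"
  using assms by (cases x x' rule: linorder_cases) (auto dest: strict_mono_onD)

lemma level_pair_close:
  fixes g :: "real \<Rightarrow> real"
  assumes \<sigma>: "\<sigma> \<in> {-1, 1}" and \<tau>: "\<tau> \<in> {-1, 1}"
    and mono_I: "strict_mono_on I (\<lambda>x. \<sigma> * g x)" and mono_J: "strict_mono_on J (\<lambda>y. \<tau> * g y)"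
    and sep: "separating_on I g r (2 * e)"
    and x: "x \<in> I" "x' \<in> I" and y: "y \<in> J" "y' \<in> J"
    and level: "\<bar>g x - g y\<bar> < e" "\<bar>g x' - g y'\<bar> < e"
    and near: "\<bar>(x' + \<sigma> * \<tau> * y') - (x + \<sigma> * \<tau> * y)\<bar> < r"
  shows "\<bar>x' - x\<bar> < r"
proof (rule ccontr)
  \<comment> \<open>If \<open>x, x'\<close> are far apart, \<open>g\<close> moves by more than \<open>2 e\<close> between them, hence in the same
    direction between \<open>y, y'\<close>; then \<open>x' - x\<close> and \<open>\<sigma> \<tau> (y' - y)\<close> have the same sign.\<close>
  assume far: "\<not> \<bar>x' - x\<bar> < r"
  then have "2 * e < \<bar>g x' - g x\<bar>"
    using sep x unfolding separating_on_def by (simp add: abs_minus_commute)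
  with level have same: "sgn (g y' - g y) = sgn (g x' - g x)"
    by (auto simp: sgn_real_def abs_if split: if_splits)
  have sgn_unit: "sgn c = c" "c * c = 1" if "c \<in> {-1, 1}" for c :: real
    using that by auto
  have sgn_x: "sgn (x' - x) = \<sigma> * sgn (g x' - g x)"
    using strict_mono_on_sgn_diff[OF mono_I x] sgn_unit[OF \<sigma>]
    by (simp add: sgn_mult right_diff_distrib[symmetric])
  have sgn_y: "sgn (y' - y) = \<tau> * sgn (g y' - g y)"
    using strict_mono_on_sgn_diff[OF mono_J y] sgn_unit[OF \<tau>]
    by (simp add: sgn_mult right_diff_distrib[symmetric])
  have "sgn (\<sigma> * \<tau> * (y' - y)) = \<sigma> * (\<tau> * \<tau>) * sgn (g x' - g x)"
    using sgn_unit(1)[OF \<sigma>] sgn_unit(1)[OF \<tau>] by (simp only: sgn_mult sgn_y same mult.assoc)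
  also have "\<dots> = sgn (x' - x)"
    using sgn_unit[OF \<tau>] sgn_x by simp
  finally have "sgn (\<sigma> * \<tau> * (y' - y)) = sgn (x' - x)" .
  then have "\<bar>x' - x\<bar> \<le> \<bar>(x' - x) + \<sigma> * \<tau> * (y' - y)\<bar>"
    by (auto simp: sgn_real_def abs_if split: if_splits)
  with far near show False
    by (simp add: algebra_simps)
qed

lemma level_pair_close_both:
  fixes g :: "real \<Rightarrow> real"
  assumes \<sigma>: "\<sigma> \<in> {-1, 1}" and \<tau>: "\<tau> \<in> {-1, 1}"
    and mono_I: "strict_mono_on I (\<lambda>x. \<sigma> * g x)" and mono_J: "strict_mono_on J (\<lambda>y. \<tau> * g y)"
    and sep_I: "separating_on I g r (2 * e)" and sep_J: "separating_on J g r (2 * e)"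
    and x: "x \<in> I" "x' \<in> I" and y: "y \<in> J" "y' \<in> J"
    and level: "\<bar>g x - g y\<bar> < e" "\<bar>g x' - g y'\<bar> < e"
    and near: "\<bar>(x' + \<sigma> * \<tau> * y') - (x + \<sigma> * \<tau> * y)\<bar> < r"
  shows "\<bar>x' - x\<bar> < r \<and> \<bar>y' - y\<bar> < r"
proof
  show "\<bar>x' - x\<bar> < r"
    by (rule level_pair_close[OF \<sigma> \<tau> mono_I mono_J sep_I x y level near])
  have "(y' + \<tau> * \<sigma> * x') - (y + \<tau> * \<sigma> * x) = \<sigma> * \<tau> * ((x' + \<sigma> * \<tau> * y') - (x + \<sigma> * \<tau> * y))"
    using \<sigma> \<tau> by (auto simp: algebra_simps)
  moreover have "\<bar>\<sigma> * \<tau>\<bar> = 1"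
    using \<sigma> \<tau> by auto
  ultimately have "\<bar>(y' + \<tau> * \<sigma> * x') - (y + \<tau> * \<sigma> * x)\<bar> < r"
    using near by (simp only: abs_mult mult_1)
  moreover have "\<bar>g y - g x\<bar> < e" "\<bar>g y' - g x'\<bar> < e"
    using level by (simp_all add: abs_minus_commute)
  ultimately show "\<bar>y' - y\<bar> < r"
    using level_pair_close[OF \<tau> \<sigma> mono_J mono_I sep_J y x] by blast
qed

lemma floor_divide_eq_imp_abs_diff_less:
  fixes a b h :: real
  assumes "\<lfloor>a / h\<rfloor> = \<lfloor>b / h\<rfloor>" "0 < h"
  shows "\<bar>a - b\<bar> < h"
proof -
  have "\<bar>a / h - b / h\<bar> < 1"
    using assms(1) floor_correct[of "a / h"] floor_correct[of "b / h"] by linarith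
  moreover have "h * (a / h - b / h) = a - b"
    using assms(2) by (simp add: right_diff_distrib)
  then have "\<bar>a - b\<bar> = h * \<bar>a / h - b / h\<bar>"
    using assms(2) by (metis abs_mult abs_of_pos)
  ultimately show ?thesis
    using assms(2) by simp
qed

lemma square_cover_by_labels:
  fixes A :: "(real \<times> real) set" and lab :: "real \<times> real \<Rightarrow> 'l"
  assumes "finite L" "lab ` A \<subseteq> L"
    and close: "\<And>q q'. q \<in> A \<Longrightarrow> q' \<in> A \<Longrightarrow> lab q = lab q' \<Longrightarrow>
                  \<bar>fst q - fst q'\<bar> < d / 2 \<and> \<bar>snd q - snd q'\<bar> < d / 2"
  shows "\<exists>S. finite S \<and> card S \<le> card L \<and> A \<subseteq> (\<Union>p\<in>S. square p d)"
proof -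
  define rep where "rep l = (SOME q. q \<in> A \<and> lab q = l)" for l
  define corner where "corner l = (fst (rep l) - d / 2, snd (rep l) - d / 2)" for l
  have fin: "finite (lab ` A)"
    using assms(1,2) finite_subset by blast
  have "card (corner ` lab ` A) \<le> card L"
    using card_image_le[OF fin, of corner] card_mono[OF assms(1,2)] by linarith
  moreover have "A \<subseteq> (\<Union>p\<in>corner ` lab ` A. square p d)"
  proof
    fix q assume "q \<in> A"
    then have "rep (lab q) \<in> A \<and> lab (rep (lab q)) = lab q"
      unfolding rep_def by (intro someI[of "\<lambda>q'. q' \<in> A \<and> lab q' = lab q" q]) simp
    then have "q \<in> square (corner (lab q)) d"
      using close[OF \<open>q \<in> A\<close>, of "rep (lab q)"]
      unfolding corner_def square_def mem_Times_iff abs_less_iff by auto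
    then show "q \<in> (\<Union>p\<in>corner ` lab ` A. square p d)"
      using \<open>q \<in> A\<close> by blast
  qed
  moreover have "finite (corner ` lab ` A)"
    using fin by simp
  ultimately show ?thesis
    by blast
qed

lemma floor_bin_mem:
  fixes u d :: real
  assumes "-1 \<le> u" "u \<le> 2" "0 < d"
  shows "\<lfloor>u / (d / 2)\<rfloor> \<in> {\<lfloor>-2 / d\<rfloor>..\<lfloor>4 / d\<rfloor>}"
proof -
  have "-1 / (d / 2) \<le> u / (d / 2)" "u / (d / 2) \<le> 2 / (d / 2)"
    by (rule divide_right_mono; use assms in simp)+
  then show ?thesis
    by (auto intro: floor_mono)
qed

lemma card_bins_le:
  fixes d :: real
  assumes "0 < d" "d \<le> 1"
  shows "real (card {\<lfloor>-2 / d\<rfloor>..\<lfloor>4 / d\<rfloor>}) \<le> 8 / d"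
proof -
  define t where "t = 1 / d"
  have t: "1 \<le> t" "4 / d = 4 * t" "-2 / d = -2 * t" "8 / d = 8 * t"
    using assms by (simp_all add: t_def)
  have "real_of_int \<lfloor>4 * t\<rfloor> \<le> 4 * t" "-2 * t < real_of_int \<lfloor>-2 * t\<rfloor> + 1"
    using floor_correct[of "4 * t"] floor_correct[of "-2 * t"] by linarith+
  moreover have "real (nat (\<lfloor>4 * t\<rfloor> - \<lfloor>-2 * t\<rfloor> + 1)) = real_of_int (\<lfloor>4 * t\<rfloor> - \<lfloor>-2 * t\<rfloor> + 1)"
    using \<open>1 \<le> t\<close> by (intro of_nat_nat) (simp add: floor_mono)
  ultimately show ?thesis
    unfolding t card_atLeastAtMost_int using \<open>1 \<le> t\<close> by linarith
qed

lemma level_set_square_cover: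
  fixes g :: "real \<Rightarrow> real" and P :: "real set set"
  assumes "finite P" "{0..1} \<subseteq> \<Union>P"
    and sign: "\<And>I. I \<in> P \<Longrightarrow> \<sigma> I \<in> {-1, 1}"
    and mono: "\<And>I. I \<in> P \<Longrightarrow> strict_mono_on I (\<lambda>x. \<sigma> I * g x)"
    and sep: "\<And>I. I \<in> P \<Longrightarrow> separating_on I g (d / 2) (2 * e)"
    and d: "0 < d" "d \<le> 1"
  shows "\<exists>S. finite S \<and> real (card S) \<le> 8 * real (card P)^2 / d \<and>
           {(x, y). x \<in> {0..1} \<and> y \<in> {0..1} \<and> \<bar>g x - g y\<bar> < e} \<subseteq> (\<Union>p\<in>S. square p d)"
proof -
  define A where "A = {(x, y). x \<in> {0..1} \<and> y \<in> {0..1} \<and> \<bar>g x - g y\<bar> < e}"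
  have "\<forall>x\<in>{0..1}. \<exists>I. I \<in> P \<and> x \<in> I"
    using assms(2) by blast
  then obtain piece where piece: "\<And>x. x \<in> {0..1} \<Longrightarrow> piece x \<in> P \<and> x \<in> piece x"
    using bchoice by metis
  define s where "s q = \<sigma> (piece (fst q)) * \<sigma> (piece (snd q))" for q
  define lab where "lab q = (piece (fst q), piece (snd q), \<lfloor>(fst q + s q * snd q) / (d / 2)\<rfloor>)" for q
  define L where "L = P \<times> P \<times> {\<lfloor>-2 / d\<rfloor>..\<lfloor>4 / d\<rfloor>}"
  have "lab ` A \<subseteq> L"
  proof (rule image_subsetI)
    fix q assume "q \<in> A"
    then obtain x y where q: "q = (x, y)" and xy: "x \<in> {0..1}" "y \<in> {0..1}"
      by (auto simp: A_def)
    then have "\<sigma> (piece x) \<in> {-1, 1}" "\<sigma> (piece y) \<in> {-1, 1}"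
      using sign piece by blast+
    then have "s q \<in> {-1, 1}"
      by (auto simp: q s_def)
    then have "-1 \<le> x + s q * y" "x + s q * y \<le> 2"
      using xy by auto
    then have "\<lfloor>(x + s q * y) / (d / 2)\<rfloor> \<in> {\<lfloor>-2 / d\<rfloor>..\<lfloor>4 / d\<rfloor>}"
      using d(1) by (rule floor_bin_mem)
    then show "lab q \<in> L"
      using piece xy by (simp add: q lab_def L_def)
  qed
  have "real (card L) = real (card P) * (real (card P) * real (card {\<lfloor>-2 / d\<rfloor>..\<lfloor>4 / d\<rfloor>}))"
    by (simp only: L_def card_cartesian_product of_nat_mult)
  also have "\<dots> \<le> real (card P) * (real (card P) * (8 / d))"
    using card_bins_le[OF d] by (intro mult_left_mono) auto
  also have "\<dots> = 8 * real (card P)^2 / d"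
    by (simp add: power2_eq_square)
  finally have card_L: "real (card L) \<le> 8 * real (card P)^2 / d" .
  have close: "\<bar>fst q - fst q'\<bar> < d / 2 \<and> \<bar>snd q - snd q'\<bar> < d / 2"
    if "q \<in> A" "q' \<in> A" "lab q = lab q'" for q q'
  proof -
    obtain x y x' y' where q: "q = (x, y)" "q' = (x', y')"
      by fastforce
    let ?I = "piece x" and ?J = "piece y"
    have xy: "x \<in> {0..1}" "y \<in> {0..1}" "x' \<in> {0..1}" "y' \<in> {0..1}"
      and level: "\<bar>g x - g y\<bar> < e" "\<bar>g x' - g y'\<bar> < e"
      using that(1,2) by (auto simp: q A_def)
    have same: "piece x' = ?I" "piece y' = ?J"
      and floors: "\<lfloor>(x + s q * y) / (d / 2)\<rfloor> = \<lfloor>(x' + s q' * y') / (d / 2)\<rfloor>"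
      using that(3) by (simp_all add: q lab_def)
    have I: "?I \<in> P" "x \<in> ?I" "x' \<in> ?I" and J: "?J \<in> P" "y \<in> ?J" "y' \<in> ?J"
      using piece[OF xy(1)] piece[OF xy(2)] piece[OF xy(3)] piece[OF xy(4)] same by simp_all
    have "\<bar>(x + s q * y) - (x' + s q' * y')\<bar> < d / 2"
      using floors d by (intro floor_divide_eq_imp_abs_diff_less) simp_all
    moreover have "s q = \<sigma> ?I * \<sigma> ?J" "s q' = \<sigma> ?I * \<sigma> ?J"
      using same by (simp_all add: q s_def)
    ultimately have near: "\<bar>(x + \<sigma> ?I * \<sigma> ?J * y) - (x' + \<sigma> ?I * \<sigma> ?J * y')\<bar> < d / 2"
      by simp
    show ?thesis
      using level_pair_close_both[OF sign[OF I(1)] sign[OF J(1)] mono[OF I(1)] mono[OF J(1)]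
          sep[OF I(1)] sep[OF J(1)] I(3,2) J(3,2) level(2,1) near]
      by (simp add: q)
  qed
  have "finite L"
    using \<open>finite P\<close> by (simp add: L_def)
  then obtain S where "finite S" "card S \<le> card L" "A \<subseteq> (\<Union>p\<in>S. square p d)"
    using square_cover_by_labels[OF _ \<open>lab ` A \<subseteq> L\<close> close] by blast
  moreover have "real (card S) \<le> 8 * real (card P)^2 / d"
    using \<open>card S \<le> card L\<close> card_L by linarith
  ultimately show ?thesis
    unfolding A_def by blast
qed

lemma eventually_separating_pieces:
  fixes g :: "real \<Rightarrow> real" and P :: "real set set"
  assumes "finite P" "continuous_on UNIV g"
    and compact: "\<And>I. I \<in> P \<Longrightarrow> compact I"
    and mono: "\<And>I. I \<in> P \<Longrightarrow> strict_mono_on I (\<lambda>x. \<sigma> I * g x)"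
    and "0 < r"
  shows "\<forall>\<^sub>F e in at_right 0. \<forall>I\<in>P. separating_on I g r (2 * e)"
proof -
  have "inj_on g I" if "I \<in> P" for I
    using strict_mono_on_imp_inj_on[OF mono[OF that]] by (auto simp: inj_on_def)
  then have "\<forall>I\<in>P. \<forall>\<^sub>F \<eta> in at_right 0. separating_on I g r \<eta>"
    using compact assms(2,5) by (auto intro: eventually_separating_on continuous_on_subset)
  then have "\<forall>\<^sub>F \<eta> in at_right 0. \<forall>I\<in>P. separating_on I g r \<eta>"
    by (rule eventually_ball_finite[OF \<open>finite P\<close>])
  moreover have "filterlim (\<lambda>e. 2 * e) (at_right 0) (at_right (0::real))"
    by (rule filterlim_times_pos[OF filterlim_ident]) simp_all
  ultimately show ?thesis
    by (rule eventually_compose_filterlim)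
qed

theorem lemma2p1:
  fixes g :: "real \<Rightarrow> real"
  assumes periodic: "\<forall>x. g (x + 1) = g x"
    and diff: "\<forall>x. g differentiable at x"
    and C1: "continuous_on UNIV (deriv g)"
    and crit: "finite {x \<in> {0..1}. deriv g x = 0}"
  shows "\<exists>C::real. C > 0 \<and> (\<exists>\<delta> :: real \<Rightarrow> real.
           (\<forall>\<epsilon>>0. \<delta> \<epsilon> > 0) \<and> (\<delta> \<longlongrightarrow> 0) (at_right 0) \<and>
           (\<forall>\<epsilon>>0. \<exists>S :: (real \<times> real) set. finite S \<and> real (card S) \<le> C / \<delta> \<epsilon> \<and>
               {(x, y). x \<in> {0..1} \<and> y \<in> {0..1} \<and> \<bar>g x - g y\<bar> < \<epsilon>}
                 \<subseteq> (\<Union>p\<in>S. square p (\<delta> \<epsilon>))))"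
proof -
  obtain P \<sigma> where P: "finite P" "{0..1} \<subseteq> \<Union>P" and compact: "\<And>I. I \<in> P \<Longrightarrow> compact I"
    and sign: "\<And>I. I \<in> P \<Longrightarrow> \<sigma> I \<in> {-1, 1}" and mono: "\<And>I. I \<in> P \<Longrightarrow> strict_mono_on I (\<lambda>x. \<sigma> I * g x)"
    using piecewise_strict_mono_on[OF diff[rule_format] C1 crit] by blast
  have "continuous_on UNIV g"
    using diff by (simp add: continuous_at_imp_continuous_on differentiable_imp_continuous_within)
  then have separation:
    "\<forall>\<^sub>F e in at_right 0. \<forall>I\<in>P. separating_on I g (r / 2) (2 * e)" if "0 < r" for r
    using that by (intro eventually_separating_pieces[OF P(1) _ compact mono]) simp_all
  obtain \<delta> where \<delta>: "\<And>e. 0 < \<delta> e" "\<And>e. \<delta> e \<le> 1" and lim: "(\<delta> \<longlongrightarrow> 0) (at_right 0)"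
    and sep: "\<And>e. \<delta> e = 1 \<or> (\<forall>I\<in>P. separating_on I g (\<delta> e / 2) (2 * e))"
    using exists_scale_tendsto_0[of "\<lambda>r e. \<forall>I\<in>P. separating_on I g (r / 2) (2 * e)", OF separation] by blast
  define C where "C = 8 * real (card P)^2"
  have "0 < card P"
    using P by (auto simp: card_gt_0_iff)
  then have "8 \<le> C"
    by (simp add: C_def one_le_power)
  have cover: "\<exists>S. finite S \<and> real (card S) \<le> C / \<delta> e \<and>
      {(x, y). x \<in> {0..1} \<and> y \<in> {0..1} \<and> \<bar>g x - g y\<bar> < e} \<subseteq> (\<Union>p\<in>S. square p (\<delta> e))" for e
  proof (cases "\<delta> e = 1")
    case True
    then show ?thesis
      using \<open>8 \<le> C\<close> by (intro exI[of _ "{(0, 0)}"]) (auto simp: square_def)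
  next
    case False
    then have "\<forall>I\<in>P. separating_on I g (\<delta> e / 2) (2 * e)"
      using sep[of e] by simp
    then show ?thesis
      unfolding C_def using level_set_square_cover[OF P sign mono, of "\<delta> e" e] \<delta> by blast
  qed
  show ?thesis
  proof (intro exI[of _ C] conjI exI[of _ \<delta>] allI impI)
    show "0 < C"
      using \<open>8 \<le> C\<close> by simp
  qed (use \<delta>(1) lim cover in auto)
qed

end
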